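(* Let $G$ be an additive group and let $X$, $\preceq$, $\rho$ be as described below. Then the metric space $(X,\rho)$ is geodesic and $(X,\rho,\preceq)$ is a metric $\vee$-semilattice.
   Context: A function on an interval $(\alpha,\beta)$ is piecewise constant from the left if for every $x$ there is $\varepsilon>0$ with $f$ constant on $[x-\varepsilon,x]$. $X$ is the set of pairs $(f,a_f)$, $a_f>0$ real, $f:(a_f,+\infty)\to G$ piecewise constant from the left with $f|_{(b_f,+\infty)}\equiv0$ for some $b_f\ge a_f$. Order: $(f,a_f)\preceq(g,a_g)$ iff $a_f\le a_g$ and $f|_{(a_g,+\infty)}=g$; $(X,\preceq)$ is a $\vee$-semilattice, with supremum denoted $p\vee q$. Metric: $\rho((f,a_f),(g,a_g))=|a_f-a_g|$ if the two pairs are comparable, and $\rho(p,q)=\rho(p,p\vee q)+\rho(p\vee q,q)$ if $p,q$ are incomparable. A metric space is geodesic if any two points are joined by a segment (an isometric image of a real segment). $(X,\rho,\preceq)$ is a metric $\vee$-semilattice if (1) $x\preceq z\preceq y$ implies $\rho(x,z)+\rho(z,y)=\rho(x,y)$, and (2) $\rho(x,y)=\rho(x,x\vee y)+\rho(x\vee y,y)$ for all $x,y$. *)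

theory Defs
  imports Complex_Main
begin

text \<open>An element of X is a pair (f, a) with a > 0 and f : (a, +inf) -> G.
  Convention: f is represented as a total function real => 'g which is 0
  outside its domain (a, +inf), so equality of pairs is equality of the
  mathematical objects.\<close>

definition pc_left :: "real \<Rightarrow> (real \<Rightarrow> 'g) \<Rightarrow> bool" where
  "pc_left a f \<longleftrightarrow> (\<forall>x>a. \<exists>\<epsilon>>0. x - \<epsilon> > a \<and> (\<forall>y\<in>{x-\<epsilon>..x}. f y = f x))"

definition Xset :: "((real \<Rightarrow> 'g::group_add) \<times> real) set" where
  "Xset = {(f, a). a > 0 \<and> (\<forall>x\<le>a. f x = 0) \<and> pc_left a f
                 \<and> (\<exists>b\<ge>a. \<forall>x>b. f x = 0)}"

definition leqX :: "((real \<Rightarrow> 'g::group_add) \<times> real) \<Rightarrow> ((real \<Rightarrow> 'g) \<times> real) \<Rightarrow> bool" where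
  "leqX p q \<longleftrightarrow> snd p \<le> snd q \<and> (\<forall>x>snd q. fst p x = fst q x)"

definition joinX :: "((real \<Rightarrow> 'g::group_add) \<times> real) \<Rightarrow> ((real \<Rightarrow> 'g) \<times> real) \<Rightarrow> ((real \<Rightarrow> 'g) \<times> real)" where
  "joinX p q = (THE z. z \<in> Xset \<and> leqX p z \<and> leqX q z \<and>
                   (\<forall>w\<in>Xset. leqX p w \<and> leqX q w \<longrightarrow> leqX z w))"

definition rhoX :: "((real \<Rightarrow> 'g::group_add) \<times> real) \<Rightarrow> ((real \<Rightarrow> 'g) \<times> real) \<Rightarrow> real" where
  "rhoX p q = (if leqX p q \<or> leqX q p then \<bar>snd p - snd q\<bar>
               else \<bar>snd p - snd (joinX p q)\<bar> + \<bar>snd (joinX p q) - snd q\<bar>)"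

definition metric_on :: "'a set \<Rightarrow> ('a \<Rightarrow> 'a \<Rightarrow> real) \<Rightarrow> bool" where
  "metric_on S d \<longleftrightarrow> (\<forall>x\<in>S. \<forall>y\<in>S. d x y \<ge> 0 \<and> (d x y = 0 \<longleftrightarrow> x = y) \<and> d x y = d y x)
                    \<and> (\<forall>x\<in>S. \<forall>y\<in>S. \<forall>z\<in>S. d x z \<le> d x y + d y z)"

definition geodesic_on :: "'a set \<Rightarrow> ('a \<Rightarrow> 'a \<Rightarrow> real) \<Rightarrow> bool" where
  "geodesic_on S d \<longleftrightarrow> (\<forall>x\<in>S. \<forall>y\<in>S. \<exists>\<gamma> :: real \<Rightarrow> 'a.
       \<gamma> ` {0..d x y} \<subseteq> S \<and> \<gamma> 0 = x \<and> \<gamma> (d x y) = y \<and>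
       (\<forall>s\<in>{0..d x y}. \<forall>t\<in>{0..d x y}. d (\<gamma> s) (\<gamma> t) = \<bar>s - t\<bar>))"

definition join_semilattice_on :: "'a set \<Rightarrow> ('a \<Rightarrow> 'a \<Rightarrow> bool) \<Rightarrow> ('a \<Rightarrow> 'a \<Rightarrow> 'a) \<Rightarrow> bool" where
  "join_semilattice_on S le j \<longleftrightarrow>
     (\<forall>x\<in>S. le x x) \<and> (\<forall>x\<in>S. \<forall>y\<in>S. le x y \<and> le y x \<longrightarrow> x = y)
     \<and> (\<forall>x\<in>S. \<forall>y\<in>S. \<forall>z\<in>S. le x y \<and> le y z \<longrightarrow> le x z)
     \<and> (\<forall>x\<in>S. \<forall>y\<in>S. j x y \<in> S \<and> le x (j x y) \<and> le y (j x y)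
            \<and> (\<forall>z\<in>S. le x z \<and> le y z \<longrightarrow> le (j x y) z))"

definition metric_join_semilattice :: "'a set \<Rightarrow> ('a \<Rightarrow> 'a \<Rightarrow> real) \<Rightarrow> ('a \<Rightarrow> 'a \<Rightarrow> bool) \<Rightarrow> ('a \<Rightarrow> 'a \<Rightarrow> 'a) \<Rightarrow> bool" where
  "metric_join_semilattice S d le j \<longleftrightarrow>
     metric_on S d \<and> join_semilattice_on S le j
     \<and> (\<forall>x\<in>S. \<forall>y\<in>S. \<forall>z\<in>S. le x z \<and> le z y \<longrightarrow> d x z + d z y = d x y)
     \<and> (\<forall>x\<in>S. \<forall>y\<in>S. d x y = d x (j x y) + d (j x y) y)"

end

theory Submission
  imports Defs
begin

text \<open>For p, q in X let c(p, q) (join_level p q below) be the least level above both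
  base points beyond which the two functions agree; it exists because both functions vanish eventually, and it is
  attained because agreement on (c', +inf) for all c' > c means agreement on (c, +inf).
  The join p \<or> q is f_p cut down to (c(p, q), +inf), so \<rho>(p, q) = 2 c(p, q) - a_p - a_q,
  just as in a tree whose root lies at +inf.  The triangle inequality follows from
  c(x, z) \<le> max (c(x, y), c(y, z)) together with a_y \<le> min (c(x, y), c(y, z)), and a
  geodesic from p to q climbs through the truncations of f_p up to level c(p, q) and
  then descends through the truncations of f_q.\<close>

lemma Xset_iff:
  "p \<in> Xset \<longleftrightarrow> snd p > 0 \<and> (\<forall>x\<le>snd p. fst p x = 0) \<and> pc_left (snd p) (fst p)
                \<and> (\<exists>b\<ge>snd p. \<forall>x>b. fst p x = 0)"
  by (cases p) (simp add: Xset_def)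

definition truncX :: "(real \<Rightarrow> 'g::zero) \<Rightarrow> real \<Rightarrow> (real \<Rightarrow> 'g) \<times> real" where
  "truncX f t = ((\<lambda>x. if t < x then f x else 0), t)"

lemma pc_left_truncate:
  fixes f :: "real \<Rightarrow> 'g::zero"
  assumes f: "pc_left a f" and "a \<le> t"
  shows "pc_left t (\<lambda>x. if t < x then f x else 0)"
  unfolding pc_left_def
proof (intro allI impI)
  fix x assume "t < x"
  then have "a < x" using \<open>a \<le> t\<close> by simp
  then obtain e where e: "e > 0" "\<forall>y\<in>{x-e..x}. f y = f x"
    using f unfolding pc_left_def by blast
  define e' where "e' = min e ((x - t) / 2)"
  have "e' > 0" using e \<open>t < x\<close> by (simp add: e'_def)
  have "e' \<le> e" "e' \<le> (x - t) / 2" unfolding e'_def by (rule min.cobounded1, rule min.cobounded2)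
  then have "x - e' > t" using \<open>t < x\<close> by (simp add: field_simps)
  moreover have "(if t < y then f y else 0) = (if t < x then f x else 0)" if "y \<in> {x-e'..x}" for y
  proof -
    have "y \<in> {x-e..x}" using that \<open>e' \<le> e\<close> by simp
    then have "f y = f x" using e(2) by blast
    moreover have "t < y" using that \<open>x - e' > t\<close> by simp
    ultimately show ?thesis using \<open>t < x\<close> by simp
  qed
  ultimately show "\<exists>\<epsilon>>0. x - \<epsilon> > t \<and> (\<forall>y\<in>{x-\<epsilon>..x}. (if t < y then f y else 0) = (if t < x then f x else 0))"
    using \<open>e' > 0\<close> by blast
qed

lemma truncX_in_Xset:
  assumes p: "p \<in> Xset" and "snd p \<le> t"
  shows "truncX (fst p) t \<in> Xset"
proof -
  obtain b where "\<forall>x>b. fst p x = 0" using p by (auto simp: Xset_iff)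
  then have "\<forall>x>max b t. (if t < x then fst p x else 0) = 0" by simp
  moreover have "pc_left t (\<lambda>x. if t < x then fst p x else 0)"
    using p \<open>snd p \<le> t\<close> by (intro pc_left_truncate[of "snd p"]) (simp_all add: Xset_iff)
  moreover have "t > 0" using p \<open>snd p \<le> t\<close> by (simp add: Xset_iff)
  ultimately show ?thesis unfolding Xset_iff truncX_def by (auto intro!: exI[of _ "max b t"])
qed

lemma truncX_base_point: "p \<in> Xset \<Longrightarrow> truncX (fst p) (snd p) = p"
  by (cases p) (auto simp: truncX_def Xset_iff)

lemma leqX_truncX: "snd p \<le> t \<Longrightarrow> leqX p (truncX (fst p) t)"
  by (auto simp: leqX_def truncX_def)

lemma leqX_refl: "leqX p p"
  by (simp add: leqX_def)

lemma leqX_trans: "leqX p q \<Longrightarrow> leqX q r \<Longrightarrow> leqX p r"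
  by (auto simp: leqX_def)

lemma leqX_antisym:
  assumes p: "p \<in> Xset" and q: "q \<in> Xset" and "leqX p q" "leqX q p"
  shows "p = q"
proof -
  have "snd p = snd q" using assms by (auto simp: leqX_def)
  moreover have "fst p x = fst q x" for x
  proof (cases "x \<le> snd p")
    case True
    then show ?thesis using p q \<open>snd p = snd q\<close> by (simp add: Xset_iff)
  next
    case False
    then show ?thesis using \<open>leqX q p\<close> by (simp add: leqX_def)
  qed
  ultimately show ?thesis by (simp add: prod_eq_iff fun_eq_iff)
qed

definition agreement_levels :: "((real \<Rightarrow> 'g) \<times> real) \<Rightarrow> ((real \<Rightarrow> 'g) \<times> real) \<Rightarrow> real set" where
  "agreement_levels p q = {c. snd p \<le> c \<and> snd q \<le> c \<and> (\<forall>x>c. fst p x = fst q x)}"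

definition join_level :: "((real \<Rightarrow> 'g) \<times> real) \<Rightarrow> ((real \<Rightarrow> 'g) \<times> real) \<Rightarrow> real" where
  "join_level p q = Inf (agreement_levels p q)"

lemma agreement_levels_nonempty:
  assumes "p \<in> Xset" "q \<in> Xset"
  shows "agreement_levels p q \<noteq> {}"
proof -
  obtain b1 b2 where "b1 \<ge> snd p" "\<forall>x>b1. fst p x = 0" "b2 \<ge> snd q" "\<forall>x>b2. fst q x = 0"
    using assms by (auto simp: Xset_iff)
  then have "max b1 b2 \<in> agreement_levels p q" by (auto simp: agreement_levels_def)
  then show ?thesis by blast
qed

lemma bdd_below_agreement_levels: "bdd_below (agreement_levels p q)"
  by (rule bdd_belowI[of _ "snd p"]) (auto simp: agreement_levels_def)

lemma join_level_le: "c \<in> agreement_levels p q \<Longrightarrow> join_level p q \<le> c"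
  unfolding join_level_def by (rule cInf_lower[OF _ bdd_below_agreement_levels])

lemma join_level_in_agreement_levels:
  assumes p: "p \<in> Xset" and q: "q \<in> Xset"
  shows "join_level p q \<in> agreement_levels p q"
proof -
  let ?A = "agreement_levels p q"
  have "snd p \<le> join_level p q" "snd q \<le> join_level p q"
    unfolding join_level_def
    by (rule cInf_greatest[OF agreement_levels_nonempty[OF p q]], simp add: agreement_levels_def)+
  moreover have "fst p x = fst q x" if "join_level p q < x" for x
  proof -
    have "\<exists>c\<in>?A. c < x"
      using that cInf_less_iff[OF agreement_levels_nonempty[OF p q] bdd_below_agreement_levels]
      unfolding join_level_def by blast
    then show ?thesis by (auto simp: agreement_levels_def)
  qed
  ultimately show ?thesis by (auto simp: agreement_levels_def)
qed

lemma
  assumes "p \<in> Xset" "q \<in> Xset"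
  shows fst_base_le_join_level: "snd p \<le> join_level p q"
    and snd_base_le_join_level: "snd q \<le> join_level p q"
    and agree_above_join_level: "join_level p q < x \<Longrightarrow> fst p x = fst q x"
  using join_level_in_agreement_levels[OF assms] by (auto simp: agreement_levels_def)

lemma join_level_eqI:
  "c \<in> agreement_levels p q \<Longrightarrow> (\<And>d. d \<in> agreement_levels p q \<Longrightarrow> c \<le> d) \<Longrightarrow> join_level p q = c"
  unfolding join_level_def by (rule cInf_eq_minimum)

lemma join_level_commute: "join_level p q = join_level q p"
proof -
  have "agreement_levels p q = agreement_levels q p" by (auto simp: agreement_levels_def)
  then show ?thesis by (simp add: join_level_def)
qed

lemma join_level_leqX:
  assumes "p \<in> Xset" "q \<in> Xset" "leqX p q"
  shows "join_level p q = snd q"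
  using assms snd_base_le_join_level[OF assms(1,2)]
  by (intro join_level_eqI) (auto simp: agreement_levels_def leqX_def)

lemma truncX_join_level_is_lub:
  assumes p: "p \<in> Xset" and q: "q \<in> Xset"
  shows "truncX (fst p) (join_level p q) \<in> Xset"
    and "leqX p (truncX (fst p) (join_level p q))"
    and "leqX q (truncX (fst p) (join_level p q))"
    and "\<lbrakk>leqX p w; leqX q w\<rbrakk> \<Longrightarrow> leqX (truncX (fst p) (join_level p q)) w"
proof -
  show "truncX (fst p) (join_level p q) \<in> Xset" "leqX p (truncX (fst p) (join_level p q))"
    using fst_base_le_join_level[OF p q] by (simp_all add: truncX_in_Xset[OF p] leqX_truncX)
  show "leqX q (truncX (fst p) (join_level p q))"
    using snd_base_le_join_level[OF p q] agree_above_join_level[OF p q]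
    by (auto simp: leqX_def truncX_def)
  assume "leqX p w" "leqX q w"
  then have "join_level p q \<le> snd w"
    by (auto intro: join_level_le simp: leqX_def agreement_levels_def)
  with \<open>leqX p w\<close> show "leqX (truncX (fst p) (join_level p q)) w"
    by (auto simp: leqX_def truncX_def)
qed

lemma joinX_eq_truncX:
  assumes p: "p \<in> Xset" and q: "q \<in> Xset"
  shows "joinX p q = truncX (fst p) (join_level p q)"
  unfolding joinX_def
proof (rule the_equality)
  show "truncX (fst p) (join_level p q) \<in> Xset \<and> leqX p (truncX (fst p) (join_level p q))
      \<and> leqX q (truncX (fst p) (join_level p q))
      \<and> (\<forall>w\<in>Xset. leqX p w \<and> leqX q w \<longrightarrow> leqX (truncX (fst p) (join_level p q)) w)"
    using truncX_join_level_is_lub[OF p q] by blast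
next
  fix z assume "z \<in> Xset \<and> leqX p z \<and> leqX q z \<and> (\<forall>w\<in>Xset. leqX p w \<and> leqX q w \<longrightarrow> leqX z w)"
  then show "z = truncX (fst p) (join_level p q)"
    using truncX_join_level_is_lub[OF p q] leqX_antisym by blast
qed

lemma joinX_lub:
  assumes p: "p \<in> Xset" and q: "q \<in> Xset"
  shows "joinX p q \<in> Xset" "leqX p (joinX p q)" "leqX q (joinX p q)"
    and "\<lbrakk>leqX p w; leqX q w\<rbrakk> \<Longrightarrow> leqX (joinX p q) w"
  using truncX_join_level_is_lub[OF p q] by (simp_all add: joinX_eq_truncX[OF p q])

lemma rhoX_leqX: "leqX p q \<Longrightarrow> rhoX p q = snd q - snd p"
  by (auto simp: rhoX_def leqX_def)

lemma rhoX_geqX: "leqX q p \<Longrightarrow> rhoX p q = snd p - snd q"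
  by (auto simp: rhoX_def leqX_def)

lemma rhoX_eq_join_level:
  assumes p: "p \<in> Xset" and q: "q \<in> Xset"
  shows "rhoX p q = 2 * join_level p q - snd p - snd q"
proof (cases "leqX p q \<or> leqX q p")
  case True
  then show ?thesis
  proof
    assume "leqX p q"
    then show ?thesis using join_level_leqX[OF p q] by (simp add: rhoX_leqX)
  next
    assume "leqX q p"
    then show ?thesis using join_level_leqX[OF q p] join_level_commute[of p q] by (simp add: rhoX_geqX)
  qed
next
  case False
  then show ?thesis
    using joinX_eq_truncX[OF p q] fst_base_le_join_level[OF p q] snd_base_le_join_level[OF p q]
    by (simp add: rhoX_def truncX_def)
qed

lemma rhoX_commute: "p \<in> Xset \<Longrightarrow> q \<in> Xset \<Longrightarrow> rhoX p q = rhoX q p"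
  by (simp add: rhoX_eq_join_level join_level_commute)

lemma join_level_triangle:
  assumes x: "x \<in> Xset" and y: "y \<in> Xset" and z: "z \<in> Xset"
  shows "join_level x z \<le> max (join_level x y) (join_level y z)"
proof (rule join_level_le)
  have "fst x w = fst z w" if "max (join_level x y) (join_level y z) < w" for w
    using that agree_above_join_level[OF x y, of w] agree_above_join_level[OF y z, of w] by simp
  moreover have "snd x \<le> join_level x y" "snd z \<le> join_level y z"
    using fst_base_le_join_level[OF x y] snd_base_le_join_level[OF y z] .
  ultimately show "max (join_level x y) (join_level y z) \<in> agreement_levels x z"
    unfolding agreement_levels_def by (simp add: le_max_iff_disj)
qed

lemma metric_on_Xset: "metric_on (Xset :: ((real \<Rightarrow> 'g::group_add) \<times> real) set) rhoX"
  unfolding metric_on_def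
proof (intro conjI ballI)
  fix x y :: "(real \<Rightarrow> 'g) \<times> real" assume x: "x \<in> Xset" and y: "y \<in> Xset"
  note \<rho> = rhoX_eq_join_level[OF x y]
  note bounds = fst_base_le_join_level[OF x y] snd_base_le_join_level[OF x y]
  show "rhoX x y \<ge> 0" using \<rho> bounds by simp
  show "rhoX x y = rhoX y x" by (rule rhoX_commute[OF x y])
  show "rhoX x y = 0 \<longleftrightarrow> x = y"
  proof
    assume "rhoX x y = 0"
    then have "snd x = join_level x y" "snd y = join_level x y" using \<rho> bounds by simp_all
    then have "leqX x y" "leqX y x" using agree_above_join_level[OF x y] by (auto simp: leqX_def)
    then show "x = y" using leqX_antisym x y by blast
  qed (use \<rho> join_level_leqX[OF x x leqX_refl] in simp)
next
  fix x y z :: "(real \<Rightarrow> 'g) \<times> real" assume x: "x \<in> Xset" and y: "y \<in> Xset" and z: "z \<in> Xset"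
  show "rhoX x z \<le> rhoX x y + rhoX y z"
    using join_level_triangle[OF x y z] snd_base_le_join_level[OF x y] fst_base_le_join_level[OF y z]
      rhoX_eq_join_level[OF x y] rhoX_eq_join_level[OF y z] rhoX_eq_join_level[OF x z]
    by linarith
qed

lemma join_semilattice_on_Xset:
  "join_semilattice_on (Xset :: ((real \<Rightarrow> 'g::group_add) \<times> real) set) leqX joinX"
  unfolding join_semilattice_on_def
proof (intro conjI ballI impI)
  fix x y :: "(real \<Rightarrow> 'g) \<times> real" assume x: "x \<in> Xset" and y: "y \<in> Xset"
  show "joinX x y \<in> Xset" "leqX x (joinX x y)" "leqX y (joinX x y)"
    using joinX_lub[OF x y] by simp_all
  fix z assume "leqX x z \<and> leqX y z"
  then show "leqX (joinX x y) z" using joinX_lub(4)[OF x y] by simp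
next
  fix x y z :: "(real \<Rightarrow> 'g) \<times> real"
  show "leqX x x" by (rule leqX_refl)
  show "x \<in> Xset \<Longrightarrow> y \<in> Xset \<Longrightarrow> leqX x y \<and> leqX y x \<Longrightarrow> x = y"
    using leqX_antisym by blast
  show "leqX x y \<and> leqX y z \<Longrightarrow> leqX x z" using leqX_trans by blast
qed

lemma metric_join_semilattice_Xset:
  "metric_join_semilattice (Xset :: ((real \<Rightarrow> 'g::group_add) \<times> real) set) rhoX leqX joinX"
  unfolding metric_join_semilattice_def
proof (intro conjI ballI impI metric_on_Xset join_semilattice_on_Xset)
  fix x y z assume "leqX x z \<and> leqX z y"
  then show "rhoX x z + rhoX z y = rhoX x y" by (auto simp: rhoX_leqX dest: leqX_trans)
next
  fix x y :: "(real \<Rightarrow> 'g) \<times> real" assume x: "x \<in> Xset" and y: "y \<in> Xset"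
  show "rhoX x y = rhoX x (joinX x y) + rhoX (joinX x y) y"
    using rhoX_leqX[OF joinX_lub(2)[OF x y]] rhoX_geqX[OF joinX_lub(3)[OF x y]]
      rhoX_eq_join_level[OF x y]
    by (simp add: joinX_eq_truncX[OF x y] truncX_def)
qed

lemma rhoX_truncX_truncX: "rhoX (truncX f s) (truncX f t) = \<bar>s - t\<bar>"
  by (cases "s \<le> t") (auto simp: rhoX_def leqX_def truncX_def)

lemma join_level_truncX:
  assumes p: "p \<in> Xset" and q: "q \<in> Xset"
    and "snd p \<le> s" "s \<le> join_level p q" "snd q \<le> t" "t \<le> join_level p q"
  shows "join_level (truncX (fst p) s) (truncX (fst q) t) = join_level p q"
proof (rule join_level_eqI)
  show "join_level p q \<in> agreement_levels (truncX (fst p) s) (truncX (fst q) t)"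
    using assms agree_above_join_level[OF p q] by (auto simp: agreement_levels_def truncX_def)
next
  fix d assume "d \<in> agreement_levels (truncX (fst p) s) (truncX (fst q) t)"
  then have "d \<in> agreement_levels p q"
    using assms by (force simp: agreement_levels_def truncX_def)
  then show "join_level p q \<le> d" by (rule join_level_le)
qed

lemma rhoX_truncX_across:
  assumes p: "p \<in> Xset" and q: "q \<in> Xset"
    and "snd p \<le> s" "s \<le> join_level p q" "snd q \<le> t" "t \<le> join_level p q"
  shows "rhoX (truncX (fst p) s) (truncX (fst q) t) = 2 * join_level p q - s - t"
  using rhoX_eq_join_level[OF truncX_in_Xset[OF p] truncX_in_Xset[OF q]] join_level_truncX[OF assms]
    assms by (simp add: truncX_def)

definition geodesicX ::
    "((real \<Rightarrow> 'g::zero) \<times> real) \<Rightarrow> ((real \<Rightarrow> 'g) \<times> real) \<Rightarrow> real \<Rightarrow> (real \<Rightarrow> 'g) \<times> real" where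
  "geodesicX p q r =
     (if r \<le> join_level p q - snd p then truncX (fst p) (snd p + r)
      else truncX (fst q) (2 * join_level p q - snd p - r))"

lemma geodesicX_in_Xset:
  assumes p: "p \<in> Xset" and q: "q \<in> Xset" and "r \<in> {0..rhoX p q}"
  shows "geodesicX p q r \<in> Xset"
  using assms rhoX_eq_join_level[OF p q]
  by (auto simp: geodesicX_def intro!: truncX_in_Xset)

lemma geodesicX_start: "p \<in> Xset \<Longrightarrow> q \<in> Xset \<Longrightarrow> geodesicX p q 0 = p"
  using fst_base_le_join_level[of p q] by (simp add: geodesicX_def truncX_base_point)

lemma geodesicX_end:
  assumes p: "p \<in> Xset" and q: "q \<in> Xset"
  shows "geodesicX p q (rhoX p q) = q"
proof (cases "rhoX p q \<le> join_level p q - snd p")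
  case True
  \<comment> \<open>then a_q = c(p, q), where the truncations of f_p and f_q coincide\<close>
  then have "join_level p q = snd q"
    using rhoX_eq_join_level[OF p q] snd_base_le_join_level[OF p q] by simp
  moreover have "truncX (fst p) (join_level p q) = truncX (fst q) (join_level p q)"
    using agree_above_join_level[OF p q] by (auto simp: truncX_def)
  ultimately show ?thesis
    using True rhoX_eq_join_level[OF p q] truncX_base_point[OF q] by (simp add: geodesicX_def)
qed (use rhoX_eq_join_level[OF p q] truncX_base_point[OF q] in \<open>simp add: geodesicX_def\<close>)

lemma rhoX_geodesicX_ordered:
  assumes p: "p \<in> Xset" and q: "q \<in> Xset"
    and s: "s \<in> {0..rhoX p q}" and t: "t \<in> {0..rhoX p q}" and "s \<le> t"
  shows "rhoX (geodesicX p q s) (geodesicX p q t) = t - s"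
proof -
  let ?c = "join_level p q - snd p"
  note D = rhoX_eq_join_level[OF p q]
  consider "t \<le> ?c" | "s \<le> ?c" "\<not> t \<le> ?c" | "\<not> s \<le> ?c" using \<open>s \<le> t\<close> by linarith
  then show ?thesis
  proof cases
    case 2
    then show ?thesis
      using rhoX_truncX_across[OF p q, of "snd p + s" "2 * join_level p q - snd p - t"] s t D
      by (simp add: geodesicX_def)
  qed (use \<open>s \<le> t\<close> in \<open>auto simp: geodesicX_def rhoX_truncX_truncX\<close>)
qed

lemma rhoX_geodesicX:
  assumes p: "p \<in> Xset" and q: "q \<in> Xset"
    and s: "s \<in> {0..rhoX p q}" and t: "t \<in> {0..rhoX p q}"
  shows "rhoX (geodesicX p q s) (geodesicX p q t) = \<bar>s - t\<bar>"
proof (cases "s \<le> t")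
  case True
  then show ?thesis using rhoX_geodesicX_ordered[OF p q s t] by simp
next
  case False
  then show ?thesis
    using rhoX_geodesicX_ordered[OF p q t s]
      rhoX_commute[OF geodesicX_in_Xset[OF p q s] geodesicX_in_Xset[OF p q t]]
    by simp
qed

lemma geodesic_on_Xset: "geodesic_on (Xset :: ((real \<Rightarrow> 'g::group_add) \<times> real) set) rhoX"
  unfolding geodesic_on_def
proof (intro ballI)
  fix p q :: "(real \<Rightarrow> 'g) \<times> real" assume p: "p \<in> Xset" and q: "q \<in> Xset"
  show "\<exists>\<gamma>. \<gamma> ` {0..rhoX p q} \<subseteq> Xset \<and> \<gamma> 0 = p \<and> \<gamma> (rhoX p q) = q
      \<and> (\<forall>s\<in>{0..rhoX p q}. \<forall>t\<in>{0..rhoX p q}. rhoX (\<gamma> s) (\<gamma> t) = \<bar>s - t\<bar>)"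
    using geodesicX_in_Xset[OF p q] geodesicX_start[OF p q] geodesicX_end[OF p q]
      rhoX_geodesicX[OF p q]
    by (intro exI[of _ "geodesicX p q"]) blast
qed

theorem lemma5:
  shows "metric_on (Xset :: ((real \<Rightarrow> 'g::group_add) \<times> real) set) rhoX
       \<and> geodesic_on (Xset :: ((real \<Rightarrow> 'g::group_add) \<times> real) set) rhoX
       \<and> metric_join_semilattice (Xset :: ((real \<Rightarrow> 'g::group_add) \<times> real) set) rhoX leqX joinX"
  using metric_on_Xset geodesic_on_Xset metric_join_semilattice_Xset by blast

end
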